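(* Let $\mathcal{I}$ be an interval hypergraph on $[n]$ and $A$ an acyclic orientation of $\mathcal{I}$. Then the fiber $\{\pi:\mathrm{Or}_\pi=A\}$ is an interval $[\sigma,\tau]$ of the weak order on permutations of $[n]$, where $\sigma$ avoids the pattern $231$ and $\tau$ avoids the pattern $213$.
   Context: An interval hypergraph $\mathcal{I}$ on $[n]$ is a collection of intervals of $[n]$ containing all singletons. An orientation is a map $O:\mathcal{I}\to[n]$ with $O(I)\in I$; it is acyclic if there are no $H_1,\dots,H_k\in\mathcal{I}$, $k\ge2$, with $O(H_{i+1})\in H_i\setminus\{O(H_i)\}$ for $i\in[k-1]$ and $O(H_1)\in H_k\setminus\{O(H_k)\}$. For a permutation $\pi$ of $[n]$ in one-line notation, $\mathrm{Or}_\pi(I)=\pi(\min\{j:\pi(j)\in I\})$. *)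

theory Defs
  imports "HOL-Combinatorics.Permutations"
begin

definition is_interval :: "nat \<Rightarrow> nat set \<Rightarrow> bool" where
  "is_interval n I \<longleftrightarrow> (\<exists>a b. 1 \<le> a \<and> a \<le> b \<and> b \<le> n \<and> I = {a..b})"

definition interval_hypergraph :: "nat \<Rightarrow> nat set set \<Rightarrow> bool" where
  "interval_hypergraph n \<I> \<longleftrightarrow>
     (\<forall>I\<in>\<I>. is_interval n I) \<and> (\<forall>i\<in>{1..n}. {i} \<in> \<I>)"

definition orientation :: "nat set set \<Rightarrow> (nat set \<Rightarrow> nat) \<Rightarrow> bool" where
  "orientation \<I> Ori \<longleftrightarrow> (\<forall>I\<in>\<I>. Ori I \<in> I)"

definition acyclic_orientation :: "nat set set \<Rightarrow> (nat set \<Rightarrow> nat) \<Rightarrow> bool" where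
  "acyclic_orientation \<I> Ori \<longleftrightarrow> orientation \<I> Ori \<and>
     \<not> (\<exists>k::nat. \<exists>H::nat \<Rightarrow> nat set. k \<ge> 2 \<and> (\<forall>i\<in>{1..k}. H i \<in> \<I>) \<and>
          (\<forall>i\<in>{1..<k}. Ori (H (i+1)) \<in> H i - {Ori (H i)}) \<and>
          Ori (H 1) \<in> H k - {Ori (H k)})"

text \<open>Permutations of [n] in one-line notation: \<pi>(1) ... \<pi>(n).
  Or_\<pi>(I) = \<pi>(min {j. \<pi>(j) \<in> I}).\<close>
definition Or_perm :: "(nat \<Rightarrow> nat) \<Rightarrow> nat set \<Rightarrow> nat" where
  "Or_perm \<pi> I = \<pi> (LEAST j. \<pi> j \<in> I)"

definition inv_set :: "nat \<Rightarrow> (nat \<Rightarrow> nat) \<Rightarrow> (nat \<times> nat) set" where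
  "inv_set n \<pi> = {(\<pi> j, \<pi> i) | i j. 1 \<le> i \<and> i < j \<and> j \<le> n \<and> \<pi> i > \<pi> j}"

definition weak_le :: "nat \<Rightarrow> (nat \<Rightarrow> nat) \<Rightarrow> (nat \<Rightarrow> nat) \<Rightarrow> bool" where
  "weak_le n \<sigma> \<pi> \<longleftrightarrow> inv_set n \<sigma> \<subseteq> inv_set n \<pi>"

definition avoids_231 :: "nat \<Rightarrow> (nat \<Rightarrow> nat) \<Rightarrow> bool" where
  "avoids_231 n \<sigma> \<longleftrightarrow> \<not> (\<exists>i j k. 1 \<le> i \<and> i < j \<and> j < k \<and> k \<le> n \<and>
       \<sigma> k < \<sigma> i \<and> \<sigma> i < \<sigma> j)"

definition avoids_213 :: "nat \<Rightarrow> (nat \<Rightarrow> nat) \<Rightarrow> bool" where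
  "avoids_213 n \<sigma> \<longleftrightarrow> \<not> (\<exists>i j k. 1 \<le> i \<and> i < j \<and> j < k \<and> k \<le> n \<and>
       \<sigma> j < \<sigma> i \<and> \<sigma> i < \<sigma> k)"

end

theory Submission
  imports Defs
begin

text \<open>
  Let \<open>P\<close> be the transitive closure of the relation \<open>A I \<rightarrow> x\<close> for \<open>x \<in> I - {A I}\<close>.
  Acyclicity makes \<open>P\<close> a strict partial order, and \<open>Or\<^sub>\<pi> = A\<close> says exactly that the order
  of positions in \<open>\<pi>\<close> extends \<open>P\<close>. Since the hyperedges are intervals, \<open>P\<close> is convex:
  if \<open>x P y\<close> then \<open>x P z\<close> for every \<open>z\<close> strictly between \<open>x\<close> and \<open>y\<close>. For a convex strict
  order, ordering the \<open>P\<close>-incomparable pairs increasingly (resp. decreasingly) is again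
  transitive. This gives linear extensions \<open>\<sigma>\<close> and \<open>\<tau>\<close> whose inversions are exactly the
  inversions forced by \<open>P\<close>, resp. all inversions not forbidden by \<open>P\<close>, so the linear
  extensions of \<open>P\<close> are precisely the permutations between \<open>\<sigma>\<close> and \<open>\<tau>\<close>. In a 231
  pattern of \<open>\<sigma>\<close> the largest entry can precede the smallest only because \<open>P\<close> forces it;
  by convexity \<open>P\<close> then also forces it before the middle entry, contradicting the pattern.
  The case of 213 in \<open>\<tau>\<close> is symmetric.
\<close>

context linorder
begin

definition interval_convex :: "'a rel \<Rightarrow> bool" where
  "interval_convex R \<longleftrightarrow>
     (\<forall>x y z. (x, y) \<in> R \<longrightarrow> (x < z \<and> z < y \<or> y < z \<and> z < x) \<longrightarrow> (x, z) \<in> R)"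

lemma interval_convexD:
  "interval_convex R \<Longrightarrow> (x, y) \<in> R \<Longrightarrow> x < z \<and> z < y \<or> y < z \<and> z < x \<Longrightarrow> (x, z) \<in> R"
  unfolding interval_convex_def by blast

text \<open>
  Instantiating this context with \<open>dual_linorder\<close> turns \<open>sorted_extension\<close> below into
  the extension ordering incomparable pairs decreasingly.
\<close>

lemma interval_convex_dual: "linorder.interval_convex (>) R \<longleftrightarrow> interval_convex R"
  unfolding linorder.interval_convex_def[OF dual_linorder] interval_convex_def by blast

lemma interval_convex_trancl:
  assumes "interval_convex R"
  shows "interval_convex (R\<^sup>+)"
  unfolding interval_convex_def
proof (intro allI impI)
  fix x y z
  assume "(x, y) \<in> R\<^sup>+" and "x < z \<and> z < y \<or> y < z \<and> z < x"
  then show "(x, z) \<in> R\<^sup>+"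
  proof (induction arbitrary: z rule: converse_trancl_induct)
    case (base x)
    then show ?case using interval_convexD[OF assms] by blast
  next
    case (step x w)
    consider "x < z \<and> z < w \<or> w < z \<and> z < x" | "z = w" | "w < z \<and> z < y \<or> y < z \<and> z < w"
      using step.prems by fastforce
    then show ?case
    proof cases
      case 1
      then show ?thesis using interval_convexD[OF assms step.hyps(1)] by blast
    next
      case 2
      then show ?thesis using step.hyps(1) by blast
    next
      case 3
      then show ?thesis using step.hyps(1) step.IH by (blast intro: trancl_into_trancl2)
    qed
  qed
qed

definition sorted_extension :: "'a rel \<Rightarrow> 'a rel" where
  "sorted_extension P = P \<union> {(a, b). a < b \<and> (b, a) \<notin> P}"

lemma trans_sorted_extension:
  assumes "trans P" "interval_convex P"
  shows "trans (sorted_extension P)"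
proof (rule transI)
  fix a b c
  assume "(a, b) \<in> sorted_extension P" "(b, c) \<in> sorted_extension P"
  then have ab: "(a, b) \<in> P \<or> a < b \<and> (b, a) \<notin> P" and bc: "(b, c) \<in> P \<or> b < c \<and> (c, b) \<notin> P"
    by (auto simp: sorted_extension_def)
  have tr: "(x, z) \<in> P" if "(x, y) \<in> P" "(y, z) \<in> P" for x y z
    using assms(1) that by (rule transD)
  note cv = interval_convexD[OF assms(2)]
  from ab bc have "(a, c) \<in> P \<or> a < c \<and> (c, a) \<notin> P"
  proof (elim disjE conjE)
    assume "(a, b) \<in> P" "(b, c) \<in> P"
    then show ?thesis by (blast intro: tr)
  next
    assume "(a, b) \<in> P" "b < c" "(c, b) \<notin> P"
    then show ?thesis by (metis tr cv neq_iff)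
  next
    assume "a < b" "(b, a) \<notin> P" "(b, c) \<in> P"
    then show ?thesis by (metis tr cv neq_iff)
  next
    assume "a < b" "(b, a) \<notin> P" "b < c" "(c, b) \<notin> P"
    then show ?thesis by (metis cv less_trans)
  qed
  then show "(a, c) \<in> sorted_extension P" by (auto simp: sorted_extension_def)
qed

lemma strict_linear_order_sorted_extension:
  assumes "trans P" "irrefl P" "interval_convex P"
  shows "strict_linear_order (sorted_extension P)"
  using trans_sorted_extension[OF assms(1,3)] assms(2)
  by (auto simp: strict_linear_order_on_def sorted_extension_def irrefl_def total_on_def)

lemma sorted_extension_no_231:
  assumes "trans P" "irrefl P" "interval_convex P"
    and "(x, y) \<in> sorted_extension P" "(y, z) \<in> sorted_extension P"
  shows "\<not> (z < x \<and> x < y)"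
proof
  assume zxy: "z < x \<and> x < y"
  with assms(5) have "(y, z) \<in> P" by (auto simp: sorted_extension_def)
  with zxy have "(y, x) \<in> P" using interval_convexD[OF assms(3)] by blast
  moreover from this have "(x, y) \<notin> P"
    using assms(1,2) unfolding trans_def irrefl_def by blast
  ultimately show False using assms(4) by (auto simp: sorted_extension_def)
qed

end

definition position_order :: "(nat \<Rightarrow> nat) \<Rightarrow> nat rel" where
  "position_order \<pi> = {(\<pi> i, \<pi> j) | i j. i < j}"

lemma position_order_iff:
  assumes "bij \<pi>"
  shows "(a, b) \<in> position_order \<pi> \<longleftrightarrow> inv \<pi> a < inv \<pi> b"
proof
  assume "(a, b) \<in> position_order \<pi>"
  then show "inv \<pi> a < inv \<pi> b"
    using assms by (auto simp: position_order_def bij_is_inj)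
next
  assume "inv \<pi> a < inv \<pi> b"
  then have "(\<pi> (inv \<pi> a), \<pi> (inv \<pi> b)) \<in> position_order \<pi>"
    unfolding position_order_def by blast
  then show "(a, b) \<in> position_order \<pi>"
    using assms by (simp add: bij_is_surj surj_f_inv_f)
qed

lemma strict_linear_order_position_order:
  assumes "bij \<pi>"
  shows "strict_linear_order (position_order \<pi>)"
proof -
  have "inj (inv \<pi>)" using bij_is_inj[OF bij_imp_bij_inv[OF assms]] .
  then have "total (position_order \<pi>)"
    unfolding total_on_def position_order_iff[OF assms] by (metis injD linorder_neq_iff)
  then show ?thesis
    by (auto simp: position_order_iff[OF assms] strict_linear_order_on_def trans_def irrefl_def)
qed

lemma Or_perm_eq_iff:
  assumes "bij \<pi>" and "a \<in> I"
  shows "Or_perm \<pi> I = a \<longleftrightarrow> (\<forall>x\<in>I - {a}. (a, x) \<in> position_order \<pi>)"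
proof -
  have \<pi>_inv: "\<pi> (inv \<pi> x) = x" for x
    using assms(1) by (simp add: bij_is_surj surj_f_inv_f)
  have inv_\<pi>: "inv \<pi> (\<pi> j) = j" for j
    using assms(1) by (simp add: bij_is_inj)
  have "Or_perm \<pi> I = a \<longleftrightarrow> (LEAST j. \<pi> j \<in> I) = inv \<pi> a"
    using bij_inv_eq_iff[OF assms(1)] by (auto simp: Or_perm_def)
  also have "\<dots> \<longleftrightarrow> (\<forall>j. \<pi> j \<in> I \<longrightarrow> inv \<pi> a \<le> j)"
  proof
    assume "(LEAST j. \<pi> j \<in> I) = inv \<pi> a"
    then show "\<forall>j. \<pi> j \<in> I \<longrightarrow> inv \<pi> a \<le> j" by (metis Least_le)
  next
    assume "\<forall>j. \<pi> j \<in> I \<longrightarrow> inv \<pi> a \<le> j"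
    then show "(LEAST j. \<pi> j \<in> I) = inv \<pi> a"
      using assms(2) \<pi>_inv by (intro Least_equality) auto
  qed
  also have "\<dots> \<longleftrightarrow> (\<forall>x\<in>I - {a}. inv \<pi> a < inv \<pi> x)"
  proof
    assume "\<forall>j. \<pi> j \<in> I \<longrightarrow> inv \<pi> a \<le> j"
    then show "\<forall>x\<in>I - {a}. inv \<pi> a < inv \<pi> x"
      using \<pi>_inv by (metis DiffE insertCI le_neq_implies_less)
  next
    assume "\<forall>x\<in>I - {a}. inv \<pi> a < inv \<pi> x"
    then show "\<forall>j. \<pi> j \<in> I \<longrightarrow> inv \<pi> a \<le> j"
      using inv_\<pi> by (metis DiffI order.order_iff_strict singletonD)
  qed
  finally show ?thesis by (simp add: position_order_iff[OF assms(1)])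
qed

lemma inv_set_eq:
  assumes "\<pi> permutes {1..n}"
  shows "inv_set n \<pi> = {(a, b). (b, a) \<in> Restr (position_order \<pi>) {1..n} \<and> a < b}"
proof (intro set_eqI iffI)
  fix p assume "p \<in> inv_set n \<pi>"
  then obtain i j where ij: "p = (\<pi> j, \<pi> i)" "1 \<le> i" "i < j" "j \<le> n" "\<pi> j < \<pi> i"
    unfolding inv_set_def by blast
  then have "(\<pi> i, \<pi> j) \<in> position_order \<pi>"
    unfolding position_order_def by blast
  moreover have "\<pi> i \<in> {1..n}" "\<pi> j \<in> {1..n}"
    using ij(2-4) permutes_in_image[OF assms] by simp_all
  ultimately show "p \<in> {(a, b). (b, a) \<in> Restr (position_order \<pi>) {1..n} \<and> a < b}"
    using ij(1,5) by simp
next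
  fix p assume "p \<in> {(a, b). (b, a) \<in> Restr (position_order \<pi>) {1..n} \<and> a < b}"
  then obtain a b where ab: "p = (a, b)" "(b, a) \<in> position_order \<pi>" "a \<in> {1..n}" "b \<in> {1..n}" "a < b"
    by blast
  then obtain i j where ij: "b = \<pi> i" "a = \<pi> j" "i < j"
    unfolding position_order_def by blast
  moreover have "i \<in> {1..n}" "j \<in> {1..n}"
    using ab(3,4) ij(1,2) permutes_in_image[OF assms] by simp_all
  ultimately show "p \<in> inv_set n \<pi>"
    unfolding inv_set_def using ab(1,5) by auto
qed

lemma card_predecessors_less_iff:
  assumes "finite S" "strict_linear_order_on S L" "a \<in> S" "b \<in> S"
  shows "card {c \<in> S. (c, a) \<in> L} < card {c \<in> S. (c, b) \<in> L} \<longleftrightarrow> (a, b) \<in> L"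
proof -
  have L: "trans L" "irrefl L" "total_on S L"
    using assms(2) by (simp_all add: strict_linear_order_on_def)
  have less: "card {c \<in> S. (c, x) \<in> L} < card {c \<in> S. (c, y) \<in> L}"
    if "x \<in> S" "y \<in> S" "(x, y) \<in> L" for x y
  proof (rule psubset_card_mono)
    have "{c \<in> S. (c, x) \<in> L} \<subseteq> {c \<in> S. (c, y) \<in> L}"
      using L(1) that(3) unfolding trans_def by blast
    moreover have "x \<in> {c \<in> S. (c, y) \<in> L} - {c \<in> S. (c, x) \<in> L}"
      using L(2) that by (simp add: irrefl_def)
    ultimately show "{c \<in> S. (c, x) \<in> L} \<subset> {c \<in> S. (c, y) \<in> L}"
      by blast
  qed (use assms(1) in simp)
  show ?thesis
  proof
    assume lt: "card {c \<in> S. (c, a) \<in> L} < card {c \<in> S. (c, b) \<in> L}"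
    show "(a, b) \<in> L"
    proof (rule ccontr)
      assume "(a, b) \<notin> L"
      moreover have "a \<noteq> b" using lt by auto
      ultimately have "(b, a) \<in> L"
        using L(3) assms(3,4) unfolding total_on_def by blast
      then show False using less[OF assms(4,3)] lt by simp
    qed
  qed (use less assms(3,4) in blast)
qed

lemma ex_permutes_position_order:
  assumes "strict_linear_order_on {1..n} L"
  shows "\<exists>\<pi>. \<pi> permutes {1..n} \<and> Restr (position_order \<pi>) {1..n} = Restr L {1..n}"
proof -
  define S where "S = {1..n}"
  define rank where "rank a = (if a \<in> S then Suc (card {c \<in> S. (c, a) \<in> L}) else a)" for a
  have rank_less_iff: "rank a < rank b \<longleftrightarrow> (a, b) \<in> L" if "a \<in> S" "b \<in> S" for a b
    using card_predecessors_less_iff[of S L a b] assms that by (simp add: S_def rank_def)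
  have "inj_on rank S"
    using assms rank_less_iff unfolding S_def strict_linear_order_on_def total_on_def inj_on_def
    by (metis less_irrefl)
  moreover have "rank ` S \<subseteq> S"
  proof
    fix b assume "b \<in> rank ` S"
    then obtain a where a: "a \<in> S" "b = rank a" by blast
    have "{c \<in> S. (c, a) \<in> L} \<subseteq> S - {a}"
      using assms by (auto simp: strict_linear_order_on_def irrefl_def)
    then have "card {c \<in> S. (c, a) \<in> L} \<le> card (S - {a})"
      by (intro card_mono) (simp_all add: S_def)
    also have "\<dots> < n"
      using a(1) by (simp add: S_def)
    finally have "card {c \<in> S. (c, a) \<in> L} < n" .
    then show "b \<in> S" using a by (simp add: S_def rank_def)
  qed
  ultimately have "bij_betw rank S S"
    by (simp add: S_def bij_betw_def endo_inj_surj)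
  then have rank_permutes: "rank permutes S"
    by (rule bij_imp_permutes) (simp add: rank_def)
  have "Restr (position_order (inv rank)) S = Restr L S"
    using rank_less_iff
    by (auto simp: position_order_iff[OF permutes_bij[OF permutes_inv[OF rank_permutes]]]
        permutes_inv_inv[OF rank_permutes])
  with permutes_inv[OF rank_permutes] show ?thesis by (auto simp: S_def)
qed

lemma permutes_position_order_mem:
  assumes "\<pi> permutes {1..n}" and "Restr (position_order \<pi>) {1..n} = Restr L {1..n}"
    and "i \<in> {1..n}" "j \<in> {1..n}" "i < j"
  shows "(\<pi> i, \<pi> j) \<in> L"
proof -
  have "(\<pi> i, \<pi> j) \<in> Restr (position_order \<pi>) {1..n}"
    using assms(3-5) permutes_in_image[OF assms(1)] unfolding position_order_def by blast
  then show ?thesis using assms(2) by blast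
qed

definition orientation_rel :: "nat set set \<Rightarrow> (nat set \<Rightarrow> nat) \<Rightarrow> nat rel" where
  "orientation_rel \<I> A = {(A I, x) | I x. I \<in> \<I> \<and> x \<in> I - {A I}}"

lemma in_orientation_rel_iff:
  "(a, b) \<in> orientation_rel \<I> A \<longleftrightarrow> (\<exists>I\<in>\<I>. a = A I \<and> b \<in> I - {A I})"
  by (auto simp: orientation_rel_def)

lemma Or_perm_fiber_iff:
  assumes "bij \<pi>" and "orientation \<I> A"
  shows "(\<forall>I\<in>\<I>. Or_perm \<pi> I = A I) \<longleftrightarrow> (orientation_rel \<I> A)\<^sup>+ \<subseteq> position_order \<pi>"
proof -
  have "Or_perm \<pi> I = A I \<longleftrightarrow> (\<forall>x\<in>I - {A I}. (A I, x) \<in> position_order \<pi>)" if "I \<in> \<I>" for I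
    using assms(2) that unfolding orientation_def by (intro Or_perm_eq_iff[OF assms(1)]) blast
  then have "(\<forall>I\<in>\<I>. Or_perm \<pi> I = A I) \<longleftrightarrow> (\<forall>I\<in>\<I>. \<forall>x\<in>I - {A I}. (A I, x) \<in> position_order \<pi>)"
    by simp
  also have "\<dots> \<longleftrightarrow> orientation_rel \<I> A \<subseteq> position_order \<pi>"
    by (fastforce simp: orientation_rel_def)
  also have "\<dots> \<longleftrightarrow> (orientation_rel \<I> A)\<^sup>+ \<subseteq> position_order \<pi>"
  proof
    assume "orientation_rel \<I> A \<subseteq> position_order \<pi>"
    then have "(orientation_rel \<I> A)\<^sup>+ \<subseteq> (position_order \<pi>)\<^sup>+"
      by (rule trancl_mono_subset)
    also have "(position_order \<pi>)\<^sup>+ = position_order \<pi>"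
      using strict_linear_order_position_order[OF assms(1)]
      by (simp add: strict_linear_order_on_def)
    finally show "(orientation_rel \<I> A)\<^sup>+ \<subseteq> position_order \<pi>" .
  next
    assume "(orientation_rel \<I> A)\<^sup>+ \<subseteq> position_order \<pi>"
    then show "orientation_rel \<I> A \<subseteq> position_order \<pi>"
      by (meson r_into_trancl' subset_iff)
  qed
  finally show ?thesis .
qed

lemma interval_convex_orientation_rel:
  assumes "\<forall>I\<in>\<I>. is_interval n I" and "orientation \<I> A"
  shows "interval_convex (orientation_rel \<I> A)"
  unfolding interval_convex_def
proof (intro allI impI)
  fix x y z
  assume "(x, y) \<in> orientation_rel \<I> A" and between: "x < z \<and> z < y \<or> y < z \<and> z < x"
  then obtain I where I: "I \<in> \<I>" "x = A I" "y \<in> I - {A I}"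
    unfolding in_orientation_rel_iff by blast
  moreover obtain a b where "I = {a..b}"
    using assms(1) I(1) unfolding is_interval_def by blast
  moreover have "x \<in> I" using assms(2) I unfolding orientation_def by blast
  ultimately have "z \<in> I - {A I}" using between by auto
  with I show "(x, z) \<in> orientation_rel \<I> A"
    unfolding in_orientation_rel_iff by blast
qed

lemma trancl_orientation_rel_subset:
  assumes "\<forall>I\<in>\<I>. is_interval n I" and "orientation \<I> A"
  shows "(orientation_rel \<I> A)\<^sup>+ \<subseteq> {1..n} \<times> {1..n}"
proof (rule trancl_subset_Sigma)
  show "orientation_rel \<I> A \<subseteq> {1..n} \<times> {1..n}"
    using assms by (force simp: in_orientation_rel_iff is_interval_def orientation_def)
qed

lemma acyclic_orientation_rel:
  assumes "acyclic_orientation \<I> A"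
  shows "acyclic (orientation_rel \<I> A)"
proof (rule ccontr)
  assume "\<not> acyclic (orientation_rel \<I> A)"
  then obtain a where "(a, a) \<in> (orientation_rel \<I> A)\<^sup>+"
    unfolding acyclic_def by blast
  then obtain k where "0 < k" "(a, a) \<in> orientation_rel \<I> A ^^ k"
    unfolding trancl_power by blast
  then obtain f where f: "f 0 = a" "f k = a" "\<And>i. i < k \<Longrightarrow> (f i, f (Suc i)) \<in> orientation_rel \<I> A"
    unfolding relpow_fun_conv by blast
  then obtain J where J: "\<And>i. i < k \<Longrightarrow> J i \<in> \<I> \<and> A (J i) = f i \<and> f (Suc i) \<in> J i - {A (J i)}"
    unfolding in_orientation_rel_iff by metis
  have "k \<noteq> 1" using J[of 0] f(1,2) \<open>0 < k\<close> by auto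
  define H where "H i = J (i - 1)" for i
  have "2 \<le> k" using \<open>0 < k\<close> \<open>k \<noteq> 1\<close> by simp
  moreover have "\<forall>i\<in>{1..k}. H i \<in> \<I>"
    using J by (auto simp: H_def)
  moreover have "\<forall>i\<in>{1..<k}. A (H (i + 1)) \<in> H i - {A (H i)}"
  proof
    fix i assume "i \<in> {1..<k}"
    then show "A (H (i + 1)) \<in> H i - {A (H i)}"
      using J[of i] J[of "i - 1"] by (simp add: H_def less_imp_diff_less)
  qed
  moreover have "A (H 1) \<in> H k - {A (H k)}"
    using J[of 0] J[of "k - 1"] f(1,2) \<open>0 < k\<close> by (simp add: H_def)
  ultimately show False
    using assms unfolding acyclic_orientation_def by blast
qed

lemma weak_interval_linear_extensions:
  assumes \<pi>: "\<pi> permutes {1..n}" and \<sigma>: "\<sigma> permutes {1..n}" and \<tau>: "\<tau> permutes {1..n}"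
    and P: "P \<subseteq> {1..n} \<times> {1..n}" "trans P" "irrefl P"
    and \<sigma>_order: "Restr (position_order \<sigma>) {1..n} = Restr (sorted_extension P) {1..n}"
    and \<tau>_order: "Restr (position_order \<tau>) {1..n} = Restr (linorder.sorted_extension (>) P) {1..n}"
  shows "P \<subseteq> position_order \<pi> \<longleftrightarrow> weak_le n \<sigma> \<pi> \<and> weak_le n \<pi> \<tau>"
proof -
  have asym: "(b, a) \<notin> P" if "(a, b) \<in> P" for a b
    using P(2,3) that unfolding trans_def irrefl_def by blast
  have inv_set_\<sigma>: "inv_set n \<sigma> = {(a, b). (b, a) \<in> P \<and> a < b}"
    unfolding inv_set_eq[OF \<sigma>] \<sigma>_order using P(1) by (auto simp: sorted_extension_def)
  have inv_set_\<tau>: "inv_set n \<tau> = {(a, b). a \<in> {1..n} \<and> b \<in> {1..n} \<and> a < b \<and> (a, b) \<notin> P}"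
    unfolding inv_set_eq[OF \<tau>] \<tau>_order linorder.sorted_extension_def[OF dual_linorder]
    using asym by auto
  have "strict_linear_order (position_order \<pi>)"
    using permutes_bij[OF \<pi>] by (rule strict_linear_order_position_order)
  then have pos: "trans (position_order \<pi>)" "irrefl (position_order \<pi>)" "total (position_order \<pi>)"
    by (simp_all add: strict_linear_order_on_def)
  have pos_asym: "(b, a) \<notin> position_order \<pi>" if "(a, b) \<in> position_order \<pi>" for a b
    using pos(1,2) that unfolding trans_def irrefl_def by blast
  show ?thesis
  proof
    assume "P \<subseteq> position_order \<pi>"
    then show "weak_le n \<sigma> \<pi> \<and> weak_le n \<pi> \<tau>"
      using P(1) pos_asym unfolding weak_le_def inv_set_\<sigma> inv_set_\<tau> inv_set_eq[OF \<pi>] by blast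
  next
    assume between: "weak_le n \<sigma> \<pi> \<and> weak_le n \<pi> \<tau>"
    have forced: "(b, a) \<in> position_order \<pi>" if "(b, a) \<in> P" "a < b" for a b
      using between that unfolding weak_le_def inv_set_\<sigma> inv_set_eq[OF \<pi>] by blast
    have allowed: "(a, b) \<notin> P"
      if "(b, a) \<in> position_order \<pi>" "a \<in> {1..n}" "b \<in> {1..n}" "a < b" for a b
      using between that unfolding weak_le_def inv_set_\<tau> inv_set_eq[OF \<pi>] by blast
    show "P \<subseteq> position_order \<pi>"
    proof clarify
      fix a b assume ab: "(a, b) \<in> P"
      then have "a \<noteq> b" "a \<in> {1..n}" "b \<in> {1..n}"
        using P(1,3) by (auto simp: irrefl_def)
      from \<open>a \<noteq> b\<close> consider "b < a" | "a < b" by linarith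
      then show "(a, b) \<in> position_order \<pi>"
      proof cases
        case 1
        then show ?thesis using ab forced by blast
      next
        case 2
        show ?thesis
        proof (rule ccontr)
          assume "(a, b) \<notin> position_order \<pi>"
          then have "(b, a) \<in> position_order \<pi>"
            using pos(3) \<open>a \<noteq> b\<close> unfolding total_on_def by blast
          then show False
            using allowed ab 2 \<open>a \<in> {1..n}\<close> \<open>b \<in> {1..n}\<close> by blast
        qed
      qed
    qed
  qed
qed

lemma avoids_231_sorted_extension:
  assumes "\<sigma> permutes {1..n}" and P: "trans P" "irrefl P" "interval_convex P"
    and "Restr (position_order \<sigma>) {1..n} = Restr (sorted_extension P) {1..n}"
  shows "avoids_231 n \<sigma>"
  unfolding avoids_231_def
proof clarify
  fix i j k assume "1 \<le> i" "i < j" "j < k" "k \<le> n" "\<sigma> k < \<sigma> i" "\<sigma> i < \<sigma> j"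
  moreover from this have "(\<sigma> i, \<sigma> j) \<in> sorted_extension P" "(\<sigma> j, \<sigma> k) \<in> sorted_extension P"
    using permutes_position_order_mem[OF assms(1,5)] by simp_all
  ultimately show False using sorted_extension_no_231[OF P] by blast
qed

lemma avoids_213_dual_sorted_extension:
  assumes "\<tau> permutes {1..n}" and P: "trans P" "irrefl P" "interval_convex P"
    and "Restr (position_order \<tau>) {1..n} = Restr (linorder.sorted_extension (>) P) {1..n}"
  shows "avoids_213 n \<tau>"
  unfolding avoids_213_def
proof clarify
  fix i j k assume "1 \<le> i" "i < j" "j < k" "k \<le> n" "\<tau> j < \<tau> i" "\<tau> i < \<tau> k"
  moreover from this have "(\<tau> i, \<tau> j) \<in> linorder.sorted_extension (>) P"
      "(\<tau> j, \<tau> k) \<in> linorder.sorted_extension (>) P"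
    using permutes_position_order_mem[OF assms(1,5)] by simp_all
  ultimately show False
    using linorder.sorted_extension_no_231[OF dual_linorder P(1,2)] P(3)
    by (simp add: interval_convex_dual)
qed

theorem proposition3p10:
  fixes n :: nat and \<I> :: "nat set set" and A :: "nat set \<Rightarrow> nat"
  assumes "interval_hypergraph n \<I>"
    and "acyclic_orientation \<I> A"
  shows "\<exists>\<sigma> \<tau>. \<sigma> permutes {1..n} \<and> \<tau> permutes {1..n} \<and>
           {\<pi>. \<pi> permutes {1..n} \<and> (\<forall>I\<in>\<I>. Or_perm \<pi> I = A I)}
             = {\<pi>. \<pi> permutes {1..n} \<and> weak_le n \<sigma> \<pi> \<and> weak_le n \<pi> \<tau>} \<and>
           avoids_231 n \<sigma> \<and> avoids_213 n \<tau>"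
proof -
  let ?P = "(orientation_rel \<I> A)\<^sup>+"
  have ori: "orientation \<I> A" and intervals: "\<forall>I\<in>\<I>. is_interval n I"
    using assms by (simp_all add: acyclic_orientation_def interval_hypergraph_def)
  have P: "trans ?P" "irrefl ?P" "interval_convex ?P"
    using acyclic_orientation_rel[OF assms(2)]
      interval_convex_trancl[OF interval_convex_orientation_rel[OF intervals ori]]
    by (simp_all add: acyclic_irrefl)
  have P_field: "?P \<subseteq> {1..n} \<times> {1..n}"
    using trancl_orientation_rel_subset[OF intervals ori] .
  have "strict_linear_order_on {1..n} (sorted_extension ?P)"
    "strict_linear_order_on {1..n} (linorder.sorted_extension (>) ?P)"
    using strict_linear_order_sorted_extension[OF P]
      linorder.strict_linear_order_sorted_extension[OF dual_linorder P(1,2)] P(3)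
    by (auto simp: interval_convex_dual strict_linear_order_on_def total_on_def)
  then obtain \<sigma> \<tau> where \<sigma>: "\<sigma> permutes {1..n}"
      "Restr (position_order \<sigma>) {1..n} = Restr (sorted_extension ?P) {1..n}"
    and \<tau>: "\<tau> permutes {1..n}"
      "Restr (position_order \<tau>) {1..n} = Restr (linorder.sorted_extension (>) ?P) {1..n}"
    using ex_permutes_position_order by metis
  have "(\<forall>I\<in>\<I>. Or_perm \<pi> I = A I) \<longleftrightarrow> weak_le n \<sigma> \<pi> \<and> weak_le n \<pi> \<tau>"
    if "\<pi> permutes {1..n}" for \<pi>
    using Or_perm_fiber_iff[OF permutes_bij[OF that] ori]
      weak_interval_linear_extensions[OF that \<sigma>(1) \<tau>(1) P_field P(1,2) \<sigma>(2) \<tau>(2)]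
    by simp
  moreover have "avoids_231 n \<sigma>"
    using avoids_231_sorted_extension[OF \<sigma>(1) P \<sigma>(2)] .
  moreover have "avoids_213 n \<tau>"
    using avoids_213_dual_sorted_extension[OF \<tau>(1) P \<tau>(2)] .
  ultimately show ?thesis
    using \<sigma>(1) \<tau>(1) by blast
qed

end
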